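(* Let $\theta\in[\pi,2\pi)$. Then for all $x,y\in S_\theta$, $p_{S_\theta}(x,y)\le s_{S_\theta}(x,y)$, and this inequality is sharp.
   Context: $S_\theta=\{x\in\mathbb{C}:0<\arg(x)<\theta\}$. For a domain $G\subsetneq\mathbb{C}$, $d_G(x)=\inf\{|x-z|:z\in\partial G\}$, $s_G(x,y)=\frac{|x-y|}{\inf_{z\in\partial G}(|x-z|+|z-y|)}$, $p_G(x,y)=\frac{|x-y|}{\sqrt{|x-y|^2+4d_G(x)d_G(y)}}$. *)

theory Defs
  imports "HOL-Complex_Analysis.Complex_Analysis"
begin

text \<open>Argument normalised to the interval [0, 2 pi); the sector S_theta with
  theta >= pi requires this convention.\<close>
definition arg02 :: "complex \<Rightarrow> real" where
  "arg02 x = (if Arg x < 0 then Arg x + 2 * pi else Arg x)"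

definition sector :: "real \<Rightarrow> complex set" where
  "sector \<theta> = {x. 0 < arg02 x \<and> arg02 x < \<theta>}"

definition bdist :: "complex set \<Rightarrow> complex \<Rightarrow> real" where
  "bdist G x = Inf {cmod (x - z) | z. z \<in> frontier G}"

definition triangular_ratio :: "complex set \<Rightarrow> complex \<Rightarrow> complex \<Rightarrow> real" where
  "triangular_ratio G x y =
     cmod (x - y) / Inf {cmod (x - z) + cmod (z - y) | z. z \<in> frontier G}"

definition point_pair :: "complex set \<Rightarrow> complex \<Rightarrow> complex \<Rightarrow> real" where
  "point_pair G x y =
     cmod (x - y) / sqrt ((cmod (x - y))\<^sup>2 + 4 * bdist G x * bdist G y)"

end

theory Submission
  imports Defs
begin

text \<open>For \<open>\<pi> \<le> \<theta> < 2\<pi>\<close> the sector is the complement of a closed convex cone \<open>K\<close>. Choose \<open>z\<close> on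
  \<open>\<partial>K\<close> minimising \<open>|x - z| + |z - y|\<close> over \<open>K\<close>. The first-order condition at \<open>z\<close> says that the
  sum \<open>n\<close> of the unit vectors from \<open>x\<close> and from \<open>y\<close> towards \<open>z\<close> is an inner normal of \<open>K\<close>, and
  since \<open>K\<close> is a cone the half-plane \<open>n \<bullet> w \<ge> 0\<close> containing \<open>K\<close> passes through the apex.
  Comparing distances with this half-plane, \<open>(|x - z| + |z - y|)\<^sup>2 \<le> |x - y|\<^sup>2 + 4 d(x) d(y)\<close>,
  which is the inequality. For \<open>x = \<i>\<close> and \<open>y = 2\<i>\<close> the apex is an optimal boundary point and both
  sides equal \<open>1/3\<close>, so the inequality is sharp.\<close>

lemma arg02_eq_Arg2pi: "arg02 w = Arg2pi w"
proof (cases "w = 0")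
  case False
  have "exp (\<i> * of_real (Arg w + 2 * pi)) = exp (\<i> * of_real (Arg w))"
    using exp_two_pi_i by (simp add: distrib_left exp_add mult.commute mult.left_commute)
  then have "of_real (cmod w) * exp (\<i> * of_real (arg02 w)) = w"
    using Arg_eq[OF False] by (simp add: arg02_def)
  then show ?thesis
    using False mpi_less_Arg[of w] Arg_le_pi[of w]
    by (intro Arg2pi_unique[symmetric]) (auto simp: arg02_def)
qed (simp add: arg02_def Arg_zero)

lemma sin_pos_iff_on_interval:
  fixes s :: real
  assumes "- pi < s" "s < 2 * pi"
  shows "0 < sin s \<longleftrightarrow> 0 < s \<and> s < pi"
  using assms sin_gt_zero sin_le_zero[of s] sin_le_zero[of "s + 2 * pi"] sin_periodic
  by (smt (verit, ccfv_SIG) sin_minus)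

lemma sector_eq_Compl_halfplanes:
  assumes "pi \<le> \<theta>" "\<theta> < 2 * pi"
  shows "sector \<theta> = - {w. Im w \<le> 0 \<and> Re w * sin \<theta> - Im w * cos \<theta> \<le> 0}"
proof (intro set_eqI)
  fix w
  show "w \<in> sector \<theta> \<longleftrightarrow> w \<in> - {w. Im w \<le> 0 \<and> Re w * sin \<theta> - Im w * cos \<theta> \<le> 0}"
  proof (cases "w = 0")
    case False
    define t where "t = Arg2pi w"
    have t: "0 \<le> t" "t < 2 * pi"
      by (simp_all add: t_def Arg2pi_ge_0 Arg2pi_lt_2pi)
    have r: "0 < cmod w"
      using False by simp
    have "Re w * sin \<theta> - Im w * cos \<theta> = cmod w * sin (\<theta> - t)"
      by (simp add: t_def sin_diff flip: cos_Arg2pi sin_Arg2pi) (simp add: algebra_simps)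
    then have "0 < Re w * sin \<theta> - Im w * cos \<theta> \<longleftrightarrow> 0 < sin (\<theta> - t)"
      using r by (simp add: zero_less_mult_iff)
    moreover have "0 < Im w \<longleftrightarrow> 0 < sin t"
      using r by (simp add: t_def zero_less_mult_iff flip: sin_Arg2pi)
    moreover have "0 < t \<and> t < \<theta> \<longleftrightarrow> 0 < sin t \<or> 0 < sin (\<theta> - t)"
      using sin_pos_iff_on_interval[of t] sin_pos_iff_on_interval[of "\<theta> - t"] t assms by auto
    ultimately show ?thesis
      by (auto simp: sector_def arg02_eq_Arg2pi t_def[symmetric] not_le)
  qed (simp add: sector_def arg02_eq_Arg2pi)
qed


lemma sector_eq_Compl_convex_cone:
  assumes "pi \<le> \<theta>" and "\<theta> < 2 * pi"
  obtains K where "sector \<theta> = - K" and "closed K" and "convex K" and "cone K" and "K \<noteq> {}"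
    and "K \<subseteq> {w. Im w \<le> 0}"
proof
  let ?K = "{w. inner \<i> w \<le> 0} \<inter> {w. inner (Complex (sin \<theta>) (- cos \<theta>)) w \<le> 0}"
  show "sector \<theta> = - ?K"
    unfolding sector_eq_Compl_halfplanes[OF assms] by (auto simp: inner_complex_def mult.commute)
  show "closed ?K" and "convex ?K"
    by (intro closed_Int convex_Int closed_halfspace_le convex_halfspace_le)+
  show "cone ?K"
    unfolding cone_def by (auto simp: mult_nonneg_nonpos)
  have "0 \<in> ?K"
    by simp
  then show "?K \<noteq> {}"
    by blast
  show "?K \<subseteq> {w. Im w \<le> 0}"
    by (auto simp: inner_complex_def)
qed

lemma dist_sum_attains_inf:
  fixes K :: "'a::heine_borel set"
  assumes "closed K" and "K \<noteq> {}"
  obtains z where "z \<in> K" and "\<And>w. w \<in> K \<Longrightarrow> dist x z + dist z y \<le> dist x w + dist w y"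
proof -
  define f where "f w = dist x w + dist w y" for w
  obtain a where "a \<in> K"
    using assms(2) by blast
  let ?B = "K \<inter> cball x (f a)"
  have "compact ?B"
    by (intro closed_Int_compact assms(1) compact_cball)
  moreover have "a \<in> ?B"
    by (simp add: \<open>a \<in> K\<close> f_def)
  moreover have "continuous_on ?B f"
    unfolding f_def by (intro continuous_intros)
  ultimately obtain z where z: "z \<in> ?B" and zmin: "\<And>w. w \<in> ?B \<Longrightarrow> f z \<le> f w"
    using continuous_attains_inf[of ?B f] by blast
  have "f z \<le> f w" if "w \<in> K" for w
  proof (cases "w \<in> cball x (f a)")
    case False
    then have "f a < f w"
      using zero_le_dist[of w y] unfolding f_def mem_cball by linarith
    with zmin[OF \<open>a \<in> ?B\<close>] show ?thesis
      by simp
  qed (use zmin that in blast)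
  with z that show ?thesis
    unfolding f_def by blast
qed

text \<open>Replacing a minimiser by the point where the segment from \<open>x\<close> to it leaves \<open>K\<close>
  does not increase the length of the broken line.\<close>
lemma frontier_dist_sum_attains_inf:
  fixes K :: "'a::euclidean_space set"
  assumes "closed K" and "K \<noteq> {}" and "x \<notin> K"
  obtains z where "z \<in> frontier K" and "\<And>w. w \<in> K \<Longrightarrow> dist x z + dist z y \<le> dist x w + dist w y"
proof -
  obtain z0 where "z0 \<in> K" and z0min: "\<And>w. w \<in> K \<Longrightarrow> dist x z0 + dist z0 y \<le> dist x w + dist w y"
    using dist_sum_attains_inf[OF assms(1,2)] by blast
  have "closed_segment x z0 \<inter> frontier K \<noteq> {}"
    using \<open>z0 \<in> K\<close> assms(3) by (intro connected_Int_frontier) auto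
  then obtain z where z_seg: "z \<in> closed_segment x z0" and "z \<in> frontier K"
    by blast
  have "dist x z0 = dist x z + dist z z0"
    using z_seg by (simp add: between flip: between_mem_segment)
  then have "dist x z + dist z y \<le> dist x z0 + dist z0 y"
    using dist_triangle[of z y z0] by linarith
  with z0min \<open>z \<in> frontier K\<close> that show ?thesis
    by fastforce
qed

lemma has_real_derivative_norm_line:
  fixes p d :: "'a::real_inner"
  assumes "p \<noteq> 0"
  shows "((\<lambda>t. norm (p + t *\<^sub>R d)) has_real_derivative inner (sgn p) d) (at 0)"
proof -
  have line: "((\<lambda>t. p + t *\<^sub>R d) has_derivative (\<lambda>h. h *\<^sub>R d)) (at 0)"
    by (auto intro!: derivative_eq_intros)
  have "(norm has_derivative inner (sgn p)) (at (p + 0 *\<^sub>R d))"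
    using has_derivative_norm[OF assms] by (simp add: inner_commute[of _ "sgn p"])
  from has_derivative_compose[OF line this]
  show ?thesis
    by (simp add: has_field_derivative_def mult_commute_abs)
qed

lemma dist_sum_min_variational_inequality:
  fixes K :: "'a::real_inner set"
  assumes "convex K" and "z \<in> K" and "w \<in> K" and "x \<noteq> z" and "y \<noteq> z"
    and zmin: "\<And>w. w \<in> K \<Longrightarrow> dist x z + dist z y \<le> dist x w + dist w y"
  shows "0 \<le> inner (sgn (z - x) + sgn (z - y)) (w - z)"
proof (rule ccontr)
  define d where "d = w - z"
  define g where "g t = norm ((z - x) + t *\<^sub>R d) + norm ((z - y) + t *\<^sub>R d)" for t
  have g_dist: "g t = dist x (z + t *\<^sub>R d) + dist (z + t *\<^sub>R d) y" for t
    unfolding g_def dist_norm by (metis diff_add_eq norm_minus_commute)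
  have g_min: "g 0 \<le> g t" if "0 \<le> t" "t \<le> 1" for t
  proof -
    have "z + t *\<^sub>R d = (1 - t) *\<^sub>R z + t *\<^sub>R w"
      by (simp add: d_def algebra_simps)
    also have "\<dots> \<in> K"
      using assms(1-3) that by (intro convexD) auto
    finally show ?thesis
      using zmin by (simp add: g_dist)
  qed
  assume "\<not> ?thesis"
  then have "inner (sgn (z - x)) d + inner (sgn (z - y)) d < 0"
    by (simp add: d_def inner_add_left)
  moreover have "(g has_real_derivative inner (sgn (z - x)) d + inner (sgn (z - y)) d) (at 0)"
    unfolding g_def using assms(4,5) by (intro derivative_intros has_real_derivative_norm_line) auto
  ultimately obtain e where "0 < e" and e: "\<And>h. 0 < h \<Longrightarrow> h < e \<Longrightarrow> g (0 + h) < g 0"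
    using DERIV_neg_dec_right by blast
  then have "g (min (e / 2) 1) < g 0"
    by simp
  with g_min[of "min (e / 2) 1"] \<open>0 < e\<close> show False
    by simp
qed

lemma cone_normal_orthogonal:
  fixes K :: "'a::real_inner set"
  assumes "cone K" and "z \<in> K" and normal: "\<And>w. w \<in> K \<Longrightarrow> 0 \<le> inner n (w - z)"
  shows "inner n z = 0" and "\<And>w. w \<in> K \<Longrightarrow> 0 \<le> inner n w"
proof -
  have "0 \<in> K" and "2 *\<^sub>R z \<in> K"
    using assms(1,2) cone_contains_0 mem_cone[OF assms(1,2), of 2] by auto
  then have "0 \<le> inner n (0 - z)" and "0 \<le> inner n (2 *\<^sub>R z - z)"
    by (blast intro: normal)+
  then show "inner n z = 0"
    by (simp add: inner_diff_right)
  then show "0 \<le> inner n w" if "w \<in> K" for w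
    using normal[OF that] by (simp add: inner_diff_right)
qed

lemma norm_add_norm_power2:
  fixes p q :: "'a::real_inner"
  shows "(norm p + norm q)\<^sup>2 = (norm (p - q))\<^sup>2 + norm p * norm q * (norm (sgn p + sgn q))\<^sup>2"
proof (cases "p = 0 \<or> q = 0")
  case False
  have "(norm (sgn p + sgn q))\<^sup>2
      = inner (sgn p) (sgn p) + inner (sgn q) (sgn q) + 2 * inner (sgn p) (sgn q)"
    by (simp add: power2_norm_eq_inner inner_add_left inner_add_right inner_commute)
  also have "\<dots> = 2 + 2 * inner p q / (norm p * norm q)"
    using False by (simp add: dot_square_norm norm_sgn sgn_div_norm field_simps)
  moreover have "(norm (p - q))\<^sup>2 = (norm p)\<^sup>2 + (norm q)\<^sup>2 - 2 * inner p q"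
    by (simp add: power2_norm_eq_inner inner_diff_left inner_diff_right inner_commute)
  ultimately show ?thesis
    using False by (simp add: power2_sum field_simps)
qed auto

lemma neg_inner_le_norm_mult_infdist:
  fixes A :: "'a::real_inner set"
  assumes "A \<noteq> {}" and "\<And>w. w \<in> A \<Longrightarrow> 0 \<le> inner n w"
  shows "- inner n x \<le> norm n * infdist x A"
proof -
  have "- inner n x \<le> norm n * dist x w" if "w \<in> A" for w
  proof -
    have "- inner n x \<le> inner n (w - x)"
      using assms(2)[OF that] by (simp add: inner_diff_right)
    also have "\<dots> \<le> norm n * dist x w"
      using norm_cauchy_schwarz[of n "w - x"] by (simp add: dist_norm norm_minus_commute)
    finally show ?thesis .
  qed
  then have "- inner n x / norm n \<le> infdist x A" if "n \<noteq> 0"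
    unfolding infdist_notempty[OF assms(1)] using that
    by (intro cINF_greatest[OF assms(1)]) (simp add: field_simps)
  then show ?thesis
    using infdist_nonneg[of x A] by (cases "n = 0") (auto simp: field_simps)
qed

lemma inner_sgn_add_sgn:
  fixes p q :: "'a::real_inner"
  assumes "p \<noteq> 0" and "q \<noteq> 0"
  shows "inner (sgn p + sgn q) p = norm p * (norm (sgn p + sgn q))\<^sup>2 / 2"
proof -
  have unit: "inner (sgn p) (sgn p) = 1" "inner (sgn q) (sgn q) = 1"
    using assms by (simp_all add: dot_square_norm norm_sgn)
  have "inner (sgn p + sgn q) p = norm p * inner (sgn p + sgn q) (sgn p)"
    using assms(1) by (simp add: sgn_div_norm)
  moreover have "(norm (sgn p + sgn q))\<^sup>2 = 2 * inner (sgn p + sgn q) (sgn p)"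
    unfolding power2_norm_eq_inner inner_add_left inner_add_right unit
    by (simp add: inner_commute)
  ultimately show ?thesis
    by simp
qed

lemma dist_sum_minimizer_cone_normal:
  fixes K :: "'a::real_inner set"
  assumes "convex K" and "cone K" and "z \<in> K" and "x \<notin> K" and "y \<notin> K"
    and zmin: "\<And>w. w \<in> K \<Longrightarrow> dist x z + dist z y \<le> dist x w + dist w y"
  defines "n \<equiv> sgn (z - x) + sgn (z - y)"
  shows "\<And>w. w \<in> K \<Longrightarrow> 0 \<le> inner n w"
    and "- inner n x = dist x z * (norm n)\<^sup>2 / 2"
    and "- inner n y = dist z y * (norm n)\<^sup>2 / 2"
proof -
  have "x \<noteq> z" and "y \<noteq> z"
    using assms(3-5) by auto
  have "0 \<le> inner n (w - z)" if "w \<in> K" for w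
    unfolding n_def
    using dist_sum_min_variational_inequality[OF assms(1,3) that \<open>x \<noteq> z\<close> \<open>y \<noteq> z\<close> zmin] .
  note orthogonal = cone_normal_orthogonal[OF assms(2,3) this]
  show "\<And>w. w \<in> K \<Longrightarrow> 0 \<le> inner n w"
    using orthogonal(2) by blast
  have "z - x \<noteq> 0" and "z - y \<noteq> 0"
    using \<open>x \<noteq> z\<close> \<open>y \<noteq> z\<close> by auto
  with orthogonal(1) show "- inner n x = dist x z * (norm n)\<^sup>2 / 2"
    and "- inner n y = dist z y * (norm n)\<^sup>2 / 2"
    using inner_sgn_add_sgn[of "z - x" "z - y"] inner_sgn_add_sgn[of "z - y" "z - x"]
    by (simp_all add: n_def inner_diff_right dist_norm norm_minus_commute add.commute)
qed

lemma dist_sum_frontier_convex_cone_le: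
  fixes K :: "'a::euclidean_space set"
  assumes "closed K" and "convex K" and "cone K" and "K \<noteq> {}" and "x \<notin> K" and "y \<notin> K"
  obtains z where "z \<in> frontier K"
    and "(dist x z + dist z y)\<^sup>2 \<le> (dist x y)\<^sup>2 + 4 * infdist x (frontier K) * infdist y (frontier K)"
proof -
  obtain z where "z \<in> frontier K"
    and zmin: "\<And>w. w \<in> K \<Longrightarrow> dist x z + dist z y \<le> dist x w + dist w y"
    using frontier_dist_sum_attains_inf[OF assms(1,4,5)] by blast
  have "frontier K \<subseteq> K"
    using assms(1) frontier_subset_closed by blast
  define n where "n = sgn (z - x) + sgn (z - y)"
  define dx dy where "dx = infdist x (frontier K)" and "dy = infdist y (frontier K)"
  note normal = dist_sum_minimizer_cone_normal[OF assms(2,3) _ assms(5,6) zmin, folded n_def]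
  have "- inner n x \<le> norm n * dx" and "- inner n y \<le> norm n * dy"
    unfolding dx_def dy_def using \<open>z \<in> frontier K\<close> \<open>frontier K \<subseteq> K\<close> normal
    by (auto intro!: neg_inner_le_norm_mult_infdist)
  then have "norm n * (dist x z * norm n) \<le> norm n * (2 * dx)"
    and "norm n * (dist z y * norm n) \<le> norm n * (2 * dy)"
    using normal \<open>z \<in> frontier K\<close> \<open>frontier K \<subseteq> K\<close> by (auto simp: power2_eq_square mult_ac)
  then have excess: "dist x z * dist z y * (norm n)\<^sup>2 \<le> 4 * dx * dy"
  proof (cases "n = 0")
    case False
    assume "norm n * (dist x z * norm n) \<le> norm n * (2 * dx)"
      and "norm n * (dist z y * norm n) \<le> norm n * (2 * dy)"
    with False have "dist x z * norm n \<le> 2 * dx" and "dist z y * norm n \<le> 2 * dy"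
      by (simp_all add: mult_le_cancel_left_pos)
    then have "(dist x z * norm n) * (dist z y * norm n) \<le> (2 * dx) * (2 * dy)"
      by (rule mult_mono) (auto simp: dx_def infdist_nonneg)
    then show ?thesis
      by (simp add: power2_eq_square mult_ac)
  qed (simp add: dx_def dy_def infdist_nonneg)
  have "(dist x z + dist z y)\<^sup>2 = (norm (z - x) + norm (z - y))\<^sup>2"
    by (simp add: dist_norm norm_minus_commute)
  also have "\<dots> = (dist x y)\<^sup>2 + dist x z * dist z y * (norm n)\<^sup>2"
    unfolding n_def norm_add_norm_power2 by (simp add: dist_norm norm_minus_commute)
  finally show ?thesis
    using excess \<open>z \<in> frontier K\<close> that unfolding dx_def dy_def by force
qed

lemma zero_in_frontier_cone:
  fixes K :: "'a::real_normed_vector set"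
  assumes "cone K" and "closed K" and "K \<noteq> {}" and "K \<noteq> UNIV"
  shows "0 \<in> frontier K"
proof -
  have "0 \<in> K"
    using assms(1,3) cone_contains_0 by blast
  have "0 \<notin> interior K"
  proof
    assume "0 \<in> interior K"
    then obtain e where "0 < e" and ball: "ball 0 e \<subseteq> K"
      using mem_interior by blast
    have "w \<in> K" for w
    proof (cases "w = 0")
      case False
      define c where "c = e / (2 * norm w)"
      have "0 < c"
        using \<open>0 < e\<close> False by (simp add: c_def)
      have "c *\<^sub>R w \<in> K"
        using ball \<open>0 < e\<close> False by (auto simp: c_def)
      then show ?thesis
        using mem_cone[OF assms(1), of "c *\<^sub>R w" "inverse c"] \<open>0 < c\<close> by simp
    qed (use \<open>0 \<in> K\<close> in simp)
    with assms(4) show False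
      by blast
  qed
  with \<open>0 \<in> K\<close> assms(2) show ?thesis
    by (simp add: frontier_def)
qed

lemma bdist_eq_infdist: "frontier G \<noteq> {} \<Longrightarrow> bdist G x = infdist x (frontier G)"
  by (simp add: bdist_def infdist_def dist_norm Setcompr_eq_image)

lemma triangular_ratio_eq_INF:
  "triangular_ratio G x y = dist x y / (INF z\<in>frontier G. dist x z + dist z y)"
  by (simp add: triangular_ratio_def dist_norm Setcompr_eq_image)

lemma point_pair_le_triangular_ratio_Compl_cone:
  assumes "closed K" and "convex K" and "cone K" and "K \<noteq> {}" and "x \<notin> K" and "y \<notin> K"
  shows "point_pair (- K) x y \<le> triangular_ratio (- K) x y"
proof -
  obtain z where "z \<in> frontier K"
    and z_le: "(dist x z + dist z y)\<^sup>2 \<le> (dist x y)\<^sup>2 + 4 * infdist x (frontier K) * infdist y (frontier K)"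
    using dist_sum_frontier_convex_cone_le[OF assms] by blast
  have "frontier K \<noteq> {}"
    using \<open>z \<in> frontier K\<close> by blast
  define T where "T = (INF w\<in>frontier K. dist x w + dist w y)"
  define D where "D = sqrt ((dist x y)\<^sup>2 + 4 * bdist (- K) x * bdist (- K) y)"
  have "T \<le> dist x z + dist z y"
    unfolding T_def using \<open>z \<in> frontier K\<close> by (intro cINF_lower bdd_belowI2[of _ 0]) auto
  also have "\<dots> \<le> D"
    using z_le \<open>frontier K \<noteq> {}\<close>
    by (auto simp: D_def bdist_eq_infdist frontier_complement intro: real_le_rsqrt)
  finally have "T \<le> D" .
  have "x \<notin> frontier K"
    using assms(1,5) frontier_subset_closed by blast
  then have "0 < infdist x (frontier K)"
    using \<open>frontier K \<noteq> {}\<close> by (intro infdist_pos_not_in_closed) auto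
  also have "infdist x (frontier K) \<le> T"
    unfolding T_def using \<open>z \<in> frontier K\<close>
    by (intro cINF_greatest) (auto intro: infdist_le order.trans[OF _ le_add_same_cancel1[THEN iffD2]])
  finally have "0 < T" .
  with \<open>T \<le> D\<close> have "dist x y / D \<le> dist x y / T"
    by (intro divide_left_mono) auto
  then show ?thesis
    by (simp add: point_pair_def triangular_ratio_eq_INF frontier_complement D_def T_def dist_norm)
qed

lemma triangular_ratio_imag_axis:
  assumes "0 \<in> frontier G" and "frontier G \<subseteq> {w. Im w \<le> 0}" and "0 < a" and "0 < b"
  shows "triangular_ratio G (of_real a * \<i>) (of_real b * \<i>) = \<bar>a - b\<bar> / (a + b)"
proof -
  have "(INF z\<in>frontier G. dist (of_real a * \<i>) z + dist z (of_real b * \<i>)) = a + b"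
  proof (rule antisym)
    show "(INF z\<in>frontier G. dist (of_real a * \<i>) z + dist z (of_real b * \<i>)) \<le> a + b"
      using assms by (intro cINF_lower2[where x = 0] bdd_belowI2[of _ 0]) (auto simp: dist_norm norm_mult)
    show "a + b \<le> (INF z\<in>frontier G. dist (of_real a * \<i>) z + dist z (of_real b * \<i>))"
    proof (rule cINF_greatest)
      fix z
      assume "z \<in> frontier G"
      then have "Im z \<le> 0"
        using assms(2) by blast
      moreover have "\<bar>Im (of_real a * \<i> - z)\<bar> \<le> dist (of_real a * \<i>) z"
        and "\<bar>Im (z - of_real b * \<i>)\<bar> \<le> dist z (of_real b * \<i>)"
        using abs_Im_le_cmod[of "of_real a * \<i> - z"] abs_Im_le_cmod[of "z - of_real b * \<i>"]
        by (simp_all add: dist_norm)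
      ultimately show "a + b \<le> dist (of_real a * \<i>) z + dist z (of_real b * \<i>)"
        using assms(3,4) by simp
    qed (use assms(1) in blast)
  qed
  moreover have "dist (of_real a * \<i>) (of_real b * \<i>) = \<bar>a - b\<bar>"
    by (simp add: dist_norm norm_mult flip: left_diff_distrib of_real_diff)
  ultimately show ?thesis
    by (simp add: triangular_ratio_eq_INF)
qed

lemma point_pair_imag_axis_ge:
  assumes "0 \<in> frontier G" and "0 < a" and "0 < b"
  shows "\<bar>a - b\<bar> / (a + b) \<le> point_pair G (of_real a * \<i>) (of_real b * \<i>)"
proof (cases "a = b")
  case False
  have "frontier G \<noteq> {}"
    using assms(1) by blast
  define dx dy where "dx = bdist G (of_real a * \<i>)" and "dy = bdist G (of_real b * \<i>)"
  have "0 \<le> dx" "dx \<le> a" "0 \<le> dy" "dy \<le> b"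
    using assms infdist_le[OF assms(1), of "of_real a * \<i>"] infdist_le[OF assms(1), of "of_real b * \<i>"]
    by (simp_all add: dx_def dy_def bdist_eq_infdist[OF \<open>frontier G \<noteq> {}\<close>] infdist_nonneg norm_mult)
  then have "dx * dy \<le> a * b"
    by (intro mult_mono) auto
  then have "sqrt ((a - b)\<^sup>2 + 4 * dx * dy) \<le> sqrt ((a + b)\<^sup>2)"
    by (simp add: power2_diff power2_sum)
  moreover have "0 < sqrt ((a - b)\<^sup>2 + 4 * dx * dy)"
    using False \<open>0 \<le> dx\<close> \<open>0 \<le> dy\<close> by (simp add: add_pos_nonneg)
  ultimately have "\<bar>a - b\<bar> / (a + b) \<le> \<bar>a - b\<bar> / sqrt ((a - b)\<^sup>2 + 4 * dx * dy)"
    using assms by (intro divide_left_mono) auto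
  also have "\<dots> = point_pair G (of_real a * \<i>) (of_real b * \<i>)"
    by (simp add: point_pair_def dx_def dy_def norm_mult power2_abs flip: left_diff_distrib of_real_diff mult.assoc)
  finally show ?thesis .
qed (simp add: point_pair_def)

theorem theorem3p9:
  fixes \<theta> :: real
  assumes "pi \<le> \<theta>" and "\<theta> < 2 * pi"
  shows "(\<forall>x \<in> sector \<theta>. \<forall>y \<in> sector \<theta>.
            point_pair (sector \<theta>) x y \<le> triangular_ratio (sector \<theta>) x y)
       \<and> (\<forall>c < 1. \<exists>x \<in> sector \<theta>. \<exists>y \<in> sector \<theta>. x \<noteq> y \<and>
            point_pair (sector \<theta>) x y > c * triangular_ratio (sector \<theta>) x y)"
proof -
  obtain K where sector: "sector \<theta> = - K" and K: "closed K" "convex K" "cone K" "K \<noteq> {}"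
    and K_Im: "K \<subseteq> {w. Im w \<le> 0}"
    using sector_eq_Compl_convex_cone[OF assms] by blast
  have "\<i> \<notin> K" and "2 * \<i> \<notin> K" and "\<i> \<noteq> 2 * \<i>"
    using K_Im by (auto simp: complex_eq_iff)
  have frontier: "frontier (sector \<theta>) = frontier K"
    by (simp add: sector frontier_complement)
  have "0 \<in> frontier (sector \<theta>)"
    using zero_in_frontier_cone[OF K(3,1,4)] \<open>\<i> \<notin> K\<close> unfolding frontier by blast
  moreover have "frontier (sector \<theta>) \<subseteq> {w. Im w \<le> 0}"
    using frontier_subset_closed[OF K(1)] K_Im unfolding frontier by blast
  ultimately have s: "triangular_ratio (sector \<theta>) \<i> (2 * \<i>) = 1 / 3"
    and "1 / 3 \<le> point_pair (sector \<theta>) \<i> (2 * \<i>)"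
    using triangular_ratio_imag_axis[of "sector \<theta>" 1 2] point_pair_imag_axis_ge[of "sector \<theta>" 1 2]
    by simp_all
  then have "c * triangular_ratio (sector \<theta>) \<i> (2 * \<i>) < point_pair (sector \<theta>) \<i> (2 * \<i>)"
    if "c < 1" for c
    using that unfolding s by linarith
  with \<open>\<i> \<notin> K\<close> \<open>2 * \<i> \<notin> K\<close> \<open>\<i> \<noteq> 2 * \<i>\<close> show ?thesis
    using point_pair_le_triangular_ratio_Compl_cone[OF K] unfolding sector by blast
qed

end
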